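(* If $n\ge3$, then $$a_{n,i}=p(q+1)a_{n,i-1}-p^2q\,a_{n,i-2}+p^iq(q-1)a_{n-1,i-1},\qquad 3\le i\le n,$$ with $a_{n,1}=pq\sum_{j=1}^{n-1}a_{n-1,j}$ and $a_{n,2}=pa_{n,1}+p^2q(q-1)a_{n-1,1}$ for $n\ge2$, and $a_{1,1}=pq^2$.
   Context: An inversion sequence of length $n$ is a sequence $\rho=\rho_1\cdots\rho_n$ of integers with $1\le \rho_i\le i$ for all $i$; $I_{n,i}$ is the set of those of length $n$ with last letter $i$. Let $\mathrm{area}(\rho)=\rho_1+\cdots+\rho_n$ and $\mathrm{sper}(\rho)=n+\rho_1+\sum_{i=1}^{n-1}\max(\rho_{i+1}-\rho_i,0)$ (area and semi-perimeter of the associated bargraph). Define $a_{n,i}=a_{n,i}(p,q)=\sum_{\rho\in I_{n,i}}p^{\mathrm{area}(\rho)}q^{\mathrm{sper}(\rho)}$. *)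

theory Defs
  imports Main
begin

text \<open>Inversion sequences of length n, as lists rho with rho!k the (k+1)-th letter,
  satisfying 1 <= rho_i <= i (1-indexed).\<close>
definition inv_seqs :: "nat \<Rightarrow> nat list set" where
  "inv_seqs n = {rho. length rho = n \<and> (\<forall>k<n. 1 \<le> rho ! k \<and> rho ! k \<le> k + 1)}"

definition inv_seqs_last :: "nat \<Rightarrow> nat \<Rightarrow> nat list set" where
  "inv_seqs_last n i = {rho \<in> inv_seqs n. rho \<noteq> [] \<and> last rho = i}"

definition area :: "nat list \<Rightarrow> nat" where
  "area rho = sum_list rho"

text \<open>Semi-perimeter: n + rho_1 + sum_{i=1}^{n-1} max(rho_{i+1} - rho_i, 0);
  truncated subtraction on nat gives exactly the max with 0.\<close>
definition sper :: "nat list \<Rightarrow> nat" where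
  "sper rho = length rho + hd rho + (\<Sum>k<length rho - 1. rho ! (k + 1) - rho ! k)"

definition a_gf :: "'a::comm_ring_1 \<Rightarrow> 'a \<Rightarrow> nat \<Rightarrow> nat \<Rightarrow> 'a" where
  "a_gf p q n i = (\<Sum>rho\<in>inv_seqs_last n i. p ^ area rho * q ^ sper rho)"

end

theory Submission
  imports Defs
begin

text \<open>Appending a letter i to a sequence with last letter j multiplies its weight
  p^area q^sper by p^i q^(1 + max(i - j, 0)), so a(n+1,i) = p^i q \<Sum>_j a(n,j) q^max(i - j, 0).
  For fixed j \<ge> 1 the kernel x_i = q^max(i - j, 0) satisfies x_i = (q+1) x_(i-1) - q x_(i-2)
  for all i \<ge> 2 except i = j + 1, where the right-hand side falls short by q - 1;
  summing over j, these defects produce the term with a(n,i-1).\<close>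

lemma finite_inv_seqs: "finite (inv_seqs n)"
proof (rule finite_subset)
  show "inv_seqs n \<subseteq> {xs. set xs \<subseteq> {..n} \<and> length xs = n}"
    by (auto simp: inv_seqs_def in_set_conv_nth) (metis Suc_leI le_trans)
  show "finite {xs. set xs \<subseteq> {..n} \<and> length xs = n}"
    by (rule finite_lists_length_eq) simp
qed

lemma last_inv_seqs:
  assumes "r \<in> inv_seqs n" "1 \<le> n"
  shows "last r \<in> {1..n}"
proof -
  have "length r = n" "\<forall>k<n. 1 \<le> r ! k \<and> r ! k \<le> k + 1"
    using assms(1) by (auto simp: inv_seqs_def)
  moreover have "last r = r ! (n - 1)"
    using assms(2) \<open>length r = n\<close> last_conv_nth[of r] by fastforce
  ultimately show ?thesis
    using assms(2) by (auto dest: spec[of _ "n - 1"])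
qed

lemma inv_seqs_last_Suc:
  assumes "1 \<le> i" "i \<le> Suc n"
  shows "inv_seqs_last (Suc n) i = (\<lambda>r. r @ [i]) ` inv_seqs n"
proof (intro set_eqI iffI)
  fix x assume "x \<in> inv_seqs_last (Suc n) i"
  hence x: "length x = Suc n" "\<forall>k<Suc n. 1 \<le> x ! k \<and> x ! k \<le> k + 1" "last x = i"
    by (auto simp: inv_seqs_last_def inv_seqs_def)
  have snoc: "x = butlast x @ [i]"
    using x(1,3) by (metis append_butlast_last_id list.size(3) nat.distinct(1))
  have "\<forall>k<n. 1 \<le> butlast x ! k \<and> butlast x ! k \<le> k + 1"
    using x(1,2) by (auto simp: nth_butlast)
  hence "butlast x \<in> inv_seqs n"
    using x(1) by (simp add: inv_seqs_def)
  with snoc show "x \<in> (\<lambda>r. r @ [i]) ` inv_seqs n" by blast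
next
  fix x assume "x \<in> (\<lambda>r. r @ [i]) ` inv_seqs n"
  then show "x \<in> inv_seqs_last (Suc n) i"
    using assms by (auto simp: inv_seqs_last_def inv_seqs_def nth_append less_Suc_eq)
qed

lemma area_snoc: "area (r @ [i]) = area r + i"
  by (simp add: area_def)

lemma sper_snoc:
  assumes "r \<noteq> []"
  shows "sper (r @ [i]) = sper r + 1 + (i - last r)"
proof -
  obtain m where m: "length r = Suc m"
    using assms by (cases r) auto
  have prefix: "(\<Sum>k<m. (r @ [i]) ! (k + 1) - (r @ [i]) ! k) = (\<Sum>k<m. r ! (k + 1) - r ! k)"
    using m by (intro sum.cong) (auto simp: nth_append)
  have "last r = r ! m"
    using m assms by (simp add: last_conv_nth)
  then show ?thesis
    using m assms prefix by (simp add: sper_def nth_append)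
qed

lemma a_gf_Suc:
  fixes p q :: "'a::comm_ring_1"
  assumes "1 \<le> n" "1 \<le> i" "i \<le> Suc n"
  shows "a_gf p q (Suc n) i = p ^ i * q * (\<Sum>j = 1..n. a_gf p q n j * q ^ (i - j))"
proof -
  let ?w = "\<lambda>r. p ^ area r * q ^ sper r * q ^ (i - last r)"
  have nonempty: "r \<noteq> []" if "r \<in> inv_seqs n" for r
    using that assms(1) by (auto simp: inv_seqs_def)
  have fibre: "{r \<in> inv_seqs n. last r = j} = inv_seqs_last n j" for j
    using nonempty by (auto simp: inv_seqs_last_def)
  have "a_gf p q (Suc n) i = (\<Sum>r\<in>inv_seqs n. p ^ area (r @ [i]) * q ^ sper (r @ [i]))"
    unfolding a_gf_def inv_seqs_last_Suc[OF assms(2,3)]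
    by (simp add: sum.reindex inj_on_def)
  also have "\<dots> = p ^ i * q * (\<Sum>r\<in>inv_seqs n. ?w r)"
    by (simp add: sum_distrib_left area_snoc sper_snoc nonempty power_add mult_ac)
  also have "(\<Sum>r\<in>inv_seqs n. ?w r) = (\<Sum>j = 1..n. \<Sum>r\<in>{r \<in> inv_seqs n. last r = j}. ?w r)"
    using finite_inv_seqs last_inv_seqs[OF _ assms(1)] by (intro sum.group[symmetric]) auto
  also have "\<dots> = (\<Sum>j = 1..n. a_gf p q n j * q ^ (i - j))"
    unfolding fibre a_gf_def sum_distrib_right
    by (intro sum.cong refl) (simp add: inv_seqs_last_def)
  finally show ?thesis .
qed

lemma power_diff_Suc_Suc:
  fixes q :: "'a::comm_ring_1"
  assumes "j \<noteq> 0"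
  shows "q ^ (Suc (Suc k) - j)
    = (q + 1) * q ^ (Suc k - j) - q * q ^ (k - j) + (if j = Suc k then q - 1 else 0)"
proof (cases "j \<le> k")
  case True
  then obtain d where "k = j + d"
    using le_Suc_ex by blast
  then show ?thesis
    by (simp add: Suc_diff_le algebra_simps)
next
  case False
  then show ?thesis
    using assms by (cases "j = Suc k") (simp_all add: algebra_simps)
qed

lemma sum_mult_power_diff_Suc_Suc:
  fixes q :: "'a::comm_ring_1"
  assumes "finite A" "0 \<notin> A" "Suc k \<in> A"
  shows "(\<Sum>j\<in>A. f j * q ^ (Suc (Suc k) - j))
    = (q + 1) * (\<Sum>j\<in>A. f j * q ^ (Suc k - j)) - q * (\<Sum>j\<in>A. f j * q ^ (k - j))
      + (q - 1) * f (Suc k)"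
proof -
  have "(\<Sum>j\<in>A. f j * q ^ (Suc (Suc k) - j))
      = (\<Sum>j\<in>A. (q + 1) * (f j * q ^ (Suc k - j)) - q * (f j * q ^ (k - j))
                + (if j = Suc k then (q - 1) * f j else 0))"
  proof (rule sum.cong[OF refl])
    fix j assume "j \<in> A"
    then have "j \<noteq> 0"
      using assms(2) by metis
    then show "f j * q ^ (Suc (Suc k) - j) = (q + 1) * (f j * q ^ (Suc k - j))
        - q * (f j * q ^ (k - j)) + (if j = Suc k then (q - 1) * f j else 0)"
      unfolding power_diff_Suc_Suc[OF \<open>j \<noteq> 0\<close>] by (simp add: algebra_simps)
  qed
  also have "\<dots> = (q + 1) * (\<Sum>j\<in>A. f j * q ^ (Suc k - j)) - q * (\<Sum>j\<in>A. f j * q ^ (k - j))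
      + (q - 1) * f (Suc k)"
    using assms(1,3) by (simp add: sum.distrib sum_subtractf sum_distrib_left sum.delta')
  finally show ?thesis .
qed

lemma a_gf_Suc_1:
  fixes p q :: "'a::comm_ring_1"
  assumes "1 \<le> n"
  shows "a_gf p q (Suc n) 1 = p * q * (\<Sum>j = 1..n. a_gf p q n j)"
  using a_gf_Suc[OF assms, of 1 p q] by simp

lemma a_gf_Suc_2:
  fixes p q :: "'a::comm_ring_1"
  assumes "1 \<le> n"
  shows "a_gf p q (Suc n) 2 = p * a_gf p q (Suc n) 1 + p ^ 2 * q * (q - 1) * a_gf p q n 1"
proof -
  let ?S = "\<lambda>l. \<Sum>j = 1..n. a_gf p q n j * q ^ (l - j)"
  have S0: "?S 0 = ?S 1" and S1: "?S 1 = (\<Sum>j = 1..n. a_gf p q n j)"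
    by (auto intro: sum.cong)
  have "a_gf p q (Suc n) 2 = p ^ 2 * q * ?S (Suc (Suc 0))"
    using a_gf_Suc[OF assms, of 2 p q] assms by (simp add: numeral_2_eq_2)
  also have "?S (Suc (Suc 0)) = (q + 1) * ?S 1 - q * ?S 0 + (q - 1) * a_gf p q n 1"
    using sum_mult_power_diff_Suc_Suc[of "{1..n}" 0 "a_gf p q n" q] assms by simp
  also have "p ^ 2 * q * ((q + 1) * ?S 1 - q * ?S 0 + (q - 1) * a_gf p q n 1)
      = p * (p * q * (\<Sum>j = 1..n. a_gf p q n j)) + p ^ 2 * q * (q - 1) * a_gf p q n 1"
    unfolding S0 S1 by (simp add: power2_eq_square algebra_simps)
  also have "\<dots> = p * a_gf p q (Suc n) 1 + p ^ 2 * q * (q - 1) * a_gf p q n 1"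
    unfolding a_gf_Suc_1[OF assms] ..
  finally show ?thesis .
qed

lemma a_gf_Suc_recurrence:
  fixes p q :: "'a::comm_ring_1"
  assumes "1 \<le> k" "Suc k \<le> n"
  shows "a_gf p q (Suc n) (Suc (Suc k))
    = p * (q + 1) * a_gf p q (Suc n) (Suc k) - p ^ 2 * q * a_gf p q (Suc n) k
      + p ^ Suc (Suc k) * q * (q - 1) * a_gf p q n (Suc k)"
proof -
  let ?S = "\<lambda>l. \<Sum>j = 1..n. a_gf p q n j * q ^ (l - j)"
  have a_gf_eq: "a_gf p q (Suc n) l = p ^ l * q * ?S l" if "1 \<le> l" "l \<le> Suc (Suc k)" for l
    using assms that by (intro a_gf_Suc) auto
  have "a_gf p q (Suc n) (Suc (Suc k)) = p ^ Suc (Suc k) * q * ?S (Suc (Suc k))"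
    by (rule a_gf_eq) simp_all
  also have "?S (Suc (Suc k)) = (q + 1) * ?S (Suc k) - q * ?S k + (q - 1) * a_gf p q n (Suc k)"
    using assms by (intro sum_mult_power_diff_Suc_Suc) auto
  also have "p ^ Suc (Suc k) * q * ((q + 1) * ?S (Suc k) - q * ?S k + (q - 1) * a_gf p q n (Suc k))
      = p * (q + 1) * (p ^ Suc k * q * ?S (Suc k)) - p ^ 2 * q * (p ^ k * q * ?S k)
        + p ^ Suc (Suc k) * q * (q - 1) * a_gf p q n (Suc k)"
    by (simp add: power2_eq_square algebra_simps)
  also have "\<dots> = p * (q + 1) * a_gf p q (Suc n) (Suc k) - p ^ 2 * q * a_gf p q (Suc n) k
      + p ^ Suc (Suc k) * q * (q - 1) * a_gf p q n (Suc k)"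
    using assms by (simp only: a_gf_eq le_SucI le_refl)
  finally show ?thesis .
qed

lemma a_gf_1_1: "a_gf p q 1 1 = p * q ^ 2"
proof -
  have "inv_seqs_last 1 1 = {[1]}"
    by (auto simp: inv_seqs_last_def inv_seqs_def length_Suc_conv)
  then show ?thesis
    by (simp add: a_gf_def area_def sper_def power2_eq_square)
qed

theorem proposition2p6:
  fixes p q :: "'a::comm_ring_1"
  shows "(\<forall>n i. 3 \<le> n \<longrightarrow> 3 \<le> i \<longrightarrow> i \<le> n \<longrightarrow>
           a_gf p q n i = p * (q + 1) * a_gf p q n (i - 1) - p ^ 2 * q * a_gf p q n (i - 2)
                          + p ^ i * q * (q - 1) * a_gf p q (n - 1) (i - 1))
       \<and> (\<forall>n. 2 \<le> n \<longrightarrow> a_gf p q n 1 = p * q * (\<Sum>j = 1..n - 1. a_gf p q (n - 1) j))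
       \<and> (\<forall>n. 2 \<le> n \<longrightarrow> a_gf p q n 2 = p * a_gf p q n 1 + p ^ 2 * q * (q - 1) * a_gf p q (n - 1) 1)
       \<and> a_gf p q 1 1 = p * q ^ 2"
proof (intro conjI allI impI)
  fix n i :: nat
  assume "3 \<le> n" "3 \<le> i" "i \<le> n"
  moreover define m k where "m = n - 1" and "k = i - 2"
  ultimately have "n = Suc m" "i = Suc (Suc k)" "1 \<le> k" "Suc k \<le> m"
    by simp_all
  then show "a_gf p q n i = p * (q + 1) * a_gf p q n (i - 1) - p ^ 2 * q * a_gf p q n (i - 2)
      + p ^ i * q * (q - 1) * a_gf p q (n - 1) (i - 1)"
    using a_gf_Suc_recurrence[of k m p q] by simp
next
  fix n :: nat
  assume "2 \<le> n"
  then obtain m where "n = Suc m" "1 \<le> m"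
    by (cases n) simp_all
  then show "a_gf p q n 1 = p * q * (\<Sum>j = 1..n - 1. a_gf p q (n - 1) j)"
    and "a_gf p q n 2 = p * a_gf p q n 1 + p ^ 2 * q * (q - 1) * a_gf p q (n - 1) 1"
    using a_gf_Suc_1[of m p q] a_gf_Suc_2[of m p q] by simp_all
next
  show "a_gf p q 1 1 = p * q ^ 2"
    by (rule a_gf_1_1)
qed

end
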